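(* Let $m_1,m_2,m_3,m_4>0$, $M=\sum m_i$, $I(\mathbf{r})=\frac{1}{2M}\sum_{i<j}m_im_jr_{ij}^2$ and $P(\mathbf{r})=r_{12}r_{34}+r_{14}r_{23}-r_{13}r_{24}$ for $\mathbf{r}=(r_{12},r_{13},r_{14},r_{23},r_{24},r_{34})$. The set $\mathcal{M}^+=\{\mathbf{r}\in[0,\infty)^6: I(\mathbf{r})=1,\ P(\mathbf{r})=0\}$ is contractible, and its Euler characteristic is $\chi(\mathcal{M}^+)=1$. *)

theory Defs
  imports "HOL-Homology.Homology" "HOL-Library.Extended_Nat"
begin

definition Z_independent :: "('a, 'b) monoid_scheme \<Rightarrow> 'a set \<Rightarrow> bool" where
  "Z_independent G S \<longleftrightarrow> S \<subseteq> carrier G \<and>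
     (\<forall>c :: 'a \<Rightarrow> int. finprod G (\<lambda>s. s [^]\<^bsub>G\<^esub> (c s)) S = \<one>\<^bsub>G\<^esub> \<longrightarrow> (\<forall>s\<in>S. c s = 0))"

definition group_rank :: "('a, 'b) monoid_scheme \<Rightarrow> enat" where
  "group_rank G = (SUP S \<in> {S. finite S \<and> Z_independent G S}. enat (card S))"

definition has_euler_characteristic :: "'a topology \<Rightarrow> int \<Rightarrow> bool" where
  "has_euler_characteristic X k \<longleftrightarrow>
     (\<forall>n::nat. group_rank (homology_group (int n) X) \<noteq> \<infinity>) \<and>
     finite {n::nat. group_rank (homology_group (int n) X) \<noteq> 0} \<and>
     k = (\<Sum>n\<in>{n::nat. group_rank (homology_group (int n) X) \<noteq> 0}.
            (-1) ^ n * int (the_enat (group_rank (homology_group (int n) X))))"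

text \<open>Coordinates r = (r12, r13, r14, r23, r24, r34) are the components 1..6 of a vector in real^6.\<close>
definition moment_I :: "real \<Rightarrow> real \<Rightarrow> real \<Rightarrow> real \<Rightarrow> real^6 \<Rightarrow> real" where
  "moment_I m1 m2 m3 m4 r =
     (m1*m2*(r$1)^2 + m1*m3*(r$2)^2 + m1*m4*(r$3)^2 + m2*m3*(r$4)^2 + m2*m4*(r$5)^2
      + m3*m4*(r$6)^2) / (2 * (m1 + m2 + m3 + m4))"

definition ptolemy_P :: "real^6 \<Rightarrow> real" where
  "ptolemy_P r = r$1 * r$6 + r$3 * r$4 - r$2 * r$5"

definition Mplus :: "real \<Rightarrow> real \<Rightarrow> real \<Rightarrow> real \<Rightarrow> (real^6) set" where
  "Mplus m1 m2 m3 m4 = {r. (\<forall>i. r$i \<ge> 0) \<and> moment_I m1 m2 m3 m4 r = 1 \<and> ptolemy_P r = 0}"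

end

theory Submission
  imports Defs "HOL-Analysis.Cartesian_Euclidean_Space" "HOL-Analysis.Brouwer_Fixpoint"
begin

text \<open>The set in question is the level set \<open>I = 1\<close> of the closed cone
  \<open>C = {r \<ge> 0. P r = 0}\<close>. Since \<open>I\<close> is a positive definite quadratic form, normalising
  \<open>r \<mapsto> r / sqrt (I r)\<close> retracts \<open>C - {0}\<close> onto it, so it suffices to contract \<open>C - {0}\<close>.
  This is done by moving \<open>r\<^sub>1\<^sub>2\<close> linearly to \<open>1\<close> and \<open>r\<^sub>1\<^sub>4, r\<^sub>2\<^sub>3, r\<^sub>3\<^sub>4\<close> linearly to \<open>0\<close>,
  while \<open>(r\<^sub>1\<^sub>3, r\<^sub>2\<^sub>4)\<close> is taken to be the unique nonnegative pair whose difference is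
  \<open>(1 - t) (r\<^sub>1\<^sub>3 - r\<^sub>2\<^sub>4)\<close> and whose product is the current value of
  \<open>r\<^sub>1\<^sub>2 r\<^sub>3\<^sub>4 + r\<^sub>1\<^sub>4 r\<^sub>2\<^sub>3\<close>; thus the Ptolemy relation holds throughout and \<open>r\<^sub>1\<^sub>2 > 0\<close>
  for \<open>t > 0\<close>. A nonempty contractible space has the homology of a point, whose only
  nonzero Betti number is \<open>b\<^sub>0 = 1\<close>.\<close>

text \<open>For \<open>w \<ge> 0\<close>, \<open>pos_root d w\<close> and \<open>pos_root (- d) w\<close> are the nonnegative
  numbers with difference \<open>d\<close> and product \<open>w\<close>.\<close>

definition pos_root :: "real \<Rightarrow> real \<Rightarrow> real" where
  "pos_root d w = (d + sqrt (d\<^sup>2 + 4 * w)) / 2"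

lemma pos_root_nonneg:
  assumes "w \<ge> 0"
  shows "pos_root d w \<ge> 0"
proof -
  have "\<bar>d\<bar> \<le> sqrt (d\<^sup>2 + 4 * w)"
    using assms real_sqrt_le_mono[of "d\<^sup>2" "d\<^sup>2 + 4 * w"] by simp
  then have "- d \<le> sqrt (d\<^sup>2 + 4 * w)" by linarith
  then show ?thesis unfolding pos_root_def by simp
qed

lemma pos_root_mult_pos_root_minus:
  assumes "w \<ge> 0"
  shows "pos_root d w * pos_root (- d) w = w"
proof -
  have "pos_root d w * pos_root (- d) w = ((sqrt (d\<^sup>2 + 4 * w))\<^sup>2 - d\<^sup>2) / 4"
    unfolding pos_root_def by (simp add: field_simps power2_eq_square)
  then show ?thesis using assms by simp
qed

lemma pos_root_diff_mult:
  assumes "a \<ge> 0" "b \<ge> 0"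
  shows "pos_root (a - b) (a * b) = a" and "pos_root (- (a - b)) (a * b) = b"
proof -
  have "(a - b)\<^sup>2 + 4 * (a * b) = (a + b)\<^sup>2" by (simp add: power2_eq_square algebra_simps)
  then have "sqrt ((a - b)\<^sup>2 + 4 * (a * b)) = a + b" using assms by simp
  then show "pos_root (a - b) (a * b) = a" "pos_root (- (a - b)) (a * b) = b"
    unfolding pos_root_def by (simp_all add: power2_commute)
qed

lemma continuous_on_pos_root [continuous_intros]:
  "continuous_on S d \<Longrightarrow> continuous_on S w \<Longrightarrow> continuous_on S (\<lambda>x. pos_root (d x) (w x))"
  unfolding pos_root_def by (intro continuous_intros) auto

lemma exhaust_6:
  fixes i :: 6
  shows "i = 1 \<or> i = 2 \<or> i = 3 \<or> i = 4 \<or> i = 5 \<or> i = 6"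
proof (induct i)
  case (of_int z)
  then have "z = 0 \<or> z = 1 \<or> z = 2 \<or> z = 3 \<or> z = 4 \<or> z = 5" by fastforce
  then show ?case by auto
qed

lemma moment_I_scaleR: "moment_I m1 m2 m3 m4 (c *\<^sub>R r) = c\<^sup>2 * moment_I m1 m2 m3 m4 r"
  unfolding moment_I_def by (simp add: power_mult_distrib distrib_left mult_ac)

lemma moment_I_pos:
  assumes "m1 > 0" "m2 > 0" "m3 > 0" "m4 > 0" "r \<noteq> 0"
  shows "moment_I m1 m2 m3 m4 r > 0"
proof -
  obtain i where "r $ i \<noteq> 0" using \<open>r \<noteq> 0\<close> by (auto simp: vec_eq_iff)
  then have "0 < m1*m2*(r$1)\<^sup>2 + m1*m3*(r$2)\<^sup>2 + m1*m4*(r$3)\<^sup>2 + m2*m3*(r$4)\<^sup>2 + m2*m4*(r$5)\<^sup>2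
      + m3*m4*(r$6)\<^sup>2"
    using exhaust_6[of i] assms(1-4)
    by (elim disjE) (simp_all add: add_pos_nonneg add_nonneg_pos add_nonneg_nonneg)
  then show ?thesis using assms unfolding moment_I_def by simp
qed

lemma continuous_on_moment_I [continuous_intros]:
  "continuous_on S (moment_I m1 m2 m3 m4)"
  unfolding moment_I_def divide_inverse
  by (intro continuous_on_mult_right continuous_on_add continuous_on_mult continuous_on_const
      continuous_on_power continuous_on_component continuous_on_id)

lemma ptolemy_P_scaleR: "ptolemy_P (c *\<^sub>R r) = c\<^sup>2 * ptolemy_P r"
  unfolding ptolemy_P_def by (simp add: field_simps power2_eq_square)

definition ptolemy_cone :: "(real^6) set" where
  "ptolemy_cone = {r. (\<forall>i. r $ i \<ge> 0) \<and> ptolemy_P r = 0}"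

lemma Mplus_eq_level_set: "Mplus m1 m2 m3 m4 = {r \<in> ptolemy_cone. moment_I m1 m2 m3 m4 r = 1}"
  unfolding Mplus_def ptolemy_cone_def by blast

lemma scaleR_mem_ptolemy_cone: "r \<in> ptolemy_cone \<Longrightarrow> c \<ge> 0 \<Longrightarrow> c *\<^sub>R r \<in> ptolemy_cone"
  unfolding ptolemy_cone_def by (simp add: ptolemy_P_scaleR)

definition ptolemy_deformation :: "real \<Rightarrow> real^6 \<Rightarrow> real^6" where
  "ptolemy_deformation t r =
     (let s = 1 - t; r12 = s * r$1 + t; r14 = s * r$3; r23 = s * r$4; r34 = s * r$6;
          d = s * (r$2 - r$5); p = r12 * r34 + r14 * r23
      in \<chi> i. if i = 1 then r12 else if i = 2 then pos_root d p else if i = 3 then r14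
             else if i = 4 then r23 else if i = 5 then pos_root (- d) p else r34)"

lemma ptolemy_deformation_nth:
  fixes t :: real and r :: "real^6"
  defines "p \<equiv> ((1 - t) * r$1 + t) * ((1 - t) * r$6) + ((1 - t) * r$3) * ((1 - t) * r$4)"
  shows "ptolemy_deformation t r $ 1 = (1 - t) * r$1 + t"
    and "ptolemy_deformation t r $ 2 = pos_root ((1 - t) * (r$2 - r$5)) p"
    and "ptolemy_deformation t r $ 3 = (1 - t) * r$3"
    and "ptolemy_deformation t r $ 4 = (1 - t) * r$4"
    and "ptolemy_deformation t r $ 5 = pos_root (- ((1 - t) * (r$2 - r$5))) p"
    and "ptolemy_deformation t r $ 6 = (1 - t) * r$6"
  unfolding p_def by (simp_all add: ptolemy_deformation_def Let_def)

lemma ptolemy_deformation_in_cone: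
  assumes "0 \<le> t" "t \<le> 1" "\<forall>i. r $ i \<ge> 0"
  shows "ptolemy_deformation t r \<in> ptolemy_cone"
proof -
  have s: "1 - t \<ge> 0" using assms by simp
  have p: "((1 - t) * r$1 + t) * ((1 - t) * r$6) + ((1 - t) * r$3) * ((1 - t) * r$4) \<ge> 0"
    using s assms by (simp add: mult_nonneg_nonneg add_nonneg_nonneg)
  have "ptolemy_deformation t r $ i \<ge> 0" for i
    using exhaust_6[of i] s assms p
    by (auto simp: ptolemy_deformation_nth pos_root_nonneg mult_nonneg_nonneg add_nonneg_nonneg)
  moreover have "ptolemy_P (ptolemy_deformation t r) = 0"
    unfolding ptolemy_P_def ptolemy_deformation_nth using pos_root_mult_pos_root_minus[OF p] by simp
  ultimately show ?thesis unfolding ptolemy_cone_def by blast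
qed

lemma ptolemy_deformation_0:
  assumes "r \<in> ptolemy_cone"
  shows "ptolemy_deformation 0 r = r"
proof -
  have "\<forall>i. r $ i \<ge> 0" and "r$1 * r$6 + r$3 * r$4 = r$2 * r$5"
    using assms unfolding ptolemy_cone_def ptolemy_P_def by auto
  then have "ptolemy_deformation 0 r $ i = r $ i" for i
    using exhaust_6[of i] pos_root_diff_mult[of "r$2" "r$5"]
    by (auto simp: ptolemy_deformation_nth)
  then show ?thesis by (simp add: vec_eq_iff)
qed

lemma ptolemy_deformation_1: "ptolemy_deformation 1 r = axis 1 1"
  by (simp add: ptolemy_deformation_def pos_root_def vec_eq_iff axis_def)

lemma ptolemy_deformation_nonzero:
  assumes "0 \<le> t" "t \<le> 1" "r \<in> ptolemy_cone - {0}"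
  shows "ptolemy_deformation t r \<noteq> 0"
proof (cases "t = 0")
  case True
  then show ?thesis using assms by (simp add: ptolemy_deformation_0)
next
  case False
  have "r $ 1 \<ge> 0" using assms by (simp add: ptolemy_cone_def)
  then have "ptolemy_deformation t r $ 1 > 0"
    using False assms by (simp add: ptolemy_deformation_nth add_nonneg_pos)
  then show ?thesis by auto
qed

lemma continuous_on_ptolemy_deformation:
  "continuous_on S (\<lambda>(t, r). ptolemy_deformation t r)"
proof -
  have "continuous_on S (\<lambda>x. ptolemy_deformation (fst x) (snd x) $ i)" for i
    using exhaust_6[of i] by (elim disjE; simp only: ptolemy_deformation_nth; intro continuous_intros)
  then show ?thesis
    using continuous_on_vec_lambda[of S "\<lambda>i x. ptolemy_deformation (fst x) (snd x) $ i"]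
    by (simp add: case_prod_unfold)
qed

lemma contractible_punctured_ptolemy_cone: "contractible (ptolemy_cone - {0})"
proof -
  let ?S = "ptolemy_cone - {0}"
  let ?h = "\<lambda>(t, r). ptolemy_deformation t r"
  have "ptolemy_deformation t r \<in> ?S" if "t \<in> {0..1}" "r \<in> ?S" for t r
    using that ptolemy_deformation_in_cone[of t r] ptolemy_deformation_nonzero[of t r]
    by (simp add: ptolemy_cone_def)
  then have "?h ` ({0..1} \<times> ?S) \<subseteq> ?S" by auto
  then have "continuous_map (prod_topology (top_of_set {0..1}) (top_of_set ?S)) (top_of_set ?S) ?h"
    unfolding subtopology_Times[symmetric, of euclidean _ euclidean, simplified]
      continuous_map_subtopology_eu
    using continuous_on_ptolemy_deformation by (simp add: image_subset_iff_funcset)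
  then have "homotopic_with_canon (\<lambda>_. True) ?S ?S id (\<lambda>_. axis 1 1)"
    by (subst homotopic_with) (auto intro!: exI[of _ ?h] simp: ptolemy_deformation_0 ptolemy_deformation_1)
  then show ?thesis unfolding contractible_def by blast
qed

lemma level_set_retract_of_punctured_cone:
  fixes q :: "'a::real_normed_vector \<Rightarrow> real"
  assumes cone: "\<And>c x. x \<in> C \<Longrightarrow> c \<ge> 0 \<Longrightarrow> c *\<^sub>R x \<in> C"
    and cont: "continuous_on (C - {0}) q"
    and pos: "\<And>x. x \<in> C - {0} \<Longrightarrow> q x > 0"
    and homogeneous: "\<And>c x. q (c *\<^sub>R x) = c\<^sup>2 * q x"
  shows "{x \<in> C. q x = 1} retract_of (C - {0})"
proof -
  let ?r = "\<lambda>x. (1 / sqrt (q x)) *\<^sub>R x"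
  have "q 0 = 0" using homogeneous[of 0 0] by simp
  have "retraction (C - {0}) {x \<in> C. q x = 1} ?r"
    unfolding retraction_def
  proof (intro conjI ballI)
    show "{x \<in> C. q x = 1} \<subseteq> C - {0}" using \<open>q 0 = 0\<close> by auto
    show "continuous_on (C - {0}) ?r"
      using pos by (intro continuous_intros cont) force+
    have "?r x \<in> {x \<in> C. q x = 1}" if "x \<in> C - {0}" for x
    proof -
      have "q x > 0" using pos that by blast
      then show ?thesis using cone that by (simp add: homogeneous power_divide)
    qed
    then show "?r \<in> C - {0} \<rightarrow> {x \<in> C. q x = 1}" by blast
  qed simp
  then show ?thesis unfolding retract_of_def by blast
qed

lemma comm_group_hom_finprod:
  assumes "comm_group G" "comm_group H" "h \<in> hom G H" "finite S" "f \<in> S \<rightarrow> carrier G"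
  shows "h (finprod G f S) = finprod H (\<lambda>x. h (f x)) S"
proof -
  interpret G: comm_group G by fact
  interpret H: comm_group H by fact
  show ?thesis using \<open>finite S\<close> \<open>f \<in> S \<rightarrow> carrier G\<close>
  proof (induction S rule: finite_induct)
    case empty
    show ?case using hom_one[OF \<open>h \<in> hom G H\<close> G.is_group H.is_group] by simp
  next
    case (insert a F)
    then have "f a \<in> carrier G" "f \<in> F \<rightarrow> carrier G" by auto
    moreover have "(\<lambda>x. h (f x)) \<in> F \<rightarrow> carrier H" "h (f a) \<in> carrier H"
      using calculation \<open>h \<in> hom G H\<close> by (auto simp: hom_def)
    ultimately show ?case using insert \<open>h \<in> hom G H\<close> by (simp add: hom_mult)
  qed
qed

lemma Z_independent_iso_image:
  assumes G: "comm_group G" and H: "comm_group H" and h: "h \<in> iso G H"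
    and S: "finite S" and indep: "Z_independent G S"
  shows "Z_independent H (h ` S)"
  unfolding Z_independent_def
proof (intro conjI allI impI ballI)
  interpret G: comm_group G by fact
  interpret H: comm_group H by fact
  have hom: "h \<in> hom G H" and inj: "inj_on h (carrier G)" using h by (simp_all add: iso_iff)
  have SG: "S \<subseteq> carrier G" using indep by (simp add: Z_independent_def)
  then show "h ` S \<subseteq> carrier H" using hom by (auto simp: hom_def)
  fix c :: "_ \<Rightarrow> int" and s
  assume relation: "finprod H (\<lambda>s. s [^]\<^bsub>H\<^esub> c s) (h ` S) = \<one>\<^bsub>H\<^esub>" and s: "s \<in> h ` S"
  let ?g = "finprod G (\<lambda>x. x [^]\<^bsub>G\<^esub> c (h x)) S"
  have "finprod H (\<lambda>s. s [^]\<^bsub>H\<^esub> c s) (h ` S) = finprod H (\<lambda>x. h x [^]\<^bsub>H\<^esub> c (h x)) S"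
    by (rule H.finprod_reindex) (use \<open>h ` S \<subseteq> carrier H\<close> inj SG in \<open>auto intro: inj_on_subset\<close>)
  also have "\<dots> = finprod H (\<lambda>x. h (x [^]\<^bsub>G\<^esub> c (h x))) S"
  proof (rule H.finprod_cong')
    show "(\<lambda>x. h (x [^]\<^bsub>G\<^esub> c (h x))) \<in> S \<rightarrow> carrier H"
      using SG by (auto intro!: hom_in_carrier[OF hom] G.int_pow_closed)
    show "h x [^]\<^bsub>H\<^esub> c (h x) = h (x [^]\<^bsub>G\<^esub> c (h x))" if "x \<in> S" for x
      using hom_int_pow[OF hom _ G.is_group H.is_group] SG that by auto
  qed simp
  also have "\<dots> = h ?g"
    using SG by (intro comm_group_hom_finprod[symmetric] G H hom S) auto
  finally have "h ?g = h \<one>\<^bsub>G\<^esub>"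
    using relation hom_one[OF hom G.is_group H.is_group] by simp
  moreover have "?g \<in> carrier G"
    using SG by (intro G.finprod_closed) auto
  ultimately have "finprod G (\<lambda>x. x [^]\<^bsub>G\<^esub> (c \<circ> h) x) S = \<one>\<^bsub>G\<^esub>"
    using inj_onD[OF inj] by simp
  then have "\<forall>x\<in>S. (c \<circ> h) x = 0"
    using indep unfolding Z_independent_def by blast
  then show "c s = 0" using s by auto
qed

lemma group_rank_le_iso:
  assumes "comm_group G" "comm_group H" "h \<in> iso G H"
  shows "group_rank G \<le> group_rank H"
  unfolding group_rank_def
proof (rule SUP_least)
  fix S assume "S \<in> {S. finite S \<and> Z_independent G S}"
  then have S: "finite S" "Z_independent G S" by auto
  have "inj_on h S"
    using assms S by (auto simp: iso_iff Z_independent_def intro: inj_on_subset)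
  then have "enat (card S) = enat (card (h ` S))" by (simp add: card_image)
  also have "\<dots> \<le> (SUP S \<in> {S. finite S \<and> Z_independent H S}. enat (card S))"
    using Z_independent_iso_image[OF assms S] S by (intro SUP_upper) auto
  finally show "enat (card S) \<le> (SUP S \<in> {S. finite S \<and> Z_independent H S}. enat (card S))" .
qed

lemma group_rank_iso:
  assumes "comm_group G" "comm_group H" "G \<cong> H"
  shows "group_rank G = group_rank H"
proof -
  have "H \<cong> G" using assms by (simp add: comm_group.axioms(2) group.iso_sym)
  then show ?thesis
    using assms group_rank_le_iso by (metis antisym is_iso_def ex_in_conv)
qed

lemma group_rank_trivial_group:
  assumes "trivial_group G"
  shows "group_rank G = 0"
proof -
  interpret group G using assms by (simp add: trivial_group_def)
  interpret comm_group G
    by (rule group_comm_groupI) (use assms in \<open>auto simp: trivial_group_def\<close>)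
  have indep_empty: "S = {}" if indep: "Z_independent G S" for S
  proof (rule ccontr)
    assume "S \<noteq> {}"
    with indep assms have S: "S = {\<one>\<^bsub>G\<^esub>}"
      by (auto simp: Z_independent_def trivial_group_def)
    have "finprod G (\<lambda>s. s [^]\<^bsub>G\<^esub> (1::int)) S = \<one>\<^bsub>G\<^esub>"
      unfolding S by (rule finprod_one_eqI) simp
    then have "\<forall>s\<in>S. (1::int) = 0"
      using indep unfolding Z_independent_def by (auto dest: spec[of _ "\<lambda>_. 1"])
    then show False using S by simp
  qed
  have "group_rank G \<le> 0"
    unfolding group_rank_def
  proof (rule SUP_least)
    fix S assume "S \<in> {S. finite S \<and> Z_independent G S}"
    then show "enat (card S) \<le> 0" using indep_empty by (simp add: zero_enat_def)
  qed
  then show ?thesis by simp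
qed

lemma finprod_integer_group:
  assumes "finite S"
  shows "finprod integer_group f S = sum f S"
proof -
  interpret comm_group integer_group by (rule abelian_integer_group)
  show ?thesis using assms by (induction S rule: finite_induct) auto
qed

lemma group_rank_integer_group: "group_rank integer_group = 1"
proof (rule antisym)
  show "group_rank integer_group \<le> 1"
    unfolding group_rank_def
  proof (rule SUP_least)
    fix S assume "S \<in> {S. finite S \<and> Z_independent integer_group S}"
    then have S: "finite S" "Z_independent integer_group S" by auto
    have "card S \<le> 1"
    proof (rule ccontr)
      assume "\<not> card S \<le> 1"
      then obtain a b where ab: "a \<in> S" "b \<in> S" "a \<noteq> b"
        by (metis S(1) One_nat_def card_le_Suc0_iff_eq)
      define c where "c = (\<lambda>s::int. if s = a then b else if s = b then - a else 0)"
      have "finprod integer_group (\<lambda>s. s [^]\<^bsub>integer_group\<^esub> c s) S = (\<Sum>s\<in>S. c s * s)"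
        using S(1) by (simp add: finprod_integer_group)
      also have "\<dots> = (\<Sum>s\<in>{a, b}. c s * s)"
        by (rule sum.mono_neutral_right) (use S(1) ab in \<open>auto simp: c_def\<close>)
      also have "\<dots> = 0" using ab by (simp add: c_def)
      finally have "\<forall>s\<in>S. c s = 0"
        using S(2) unfolding Z_independent_def one_integer_group by blast
      then have "c a = 0" "c b = 0" using ab by auto
      then show False using ab by (simp add: c_def)
    qed
    then show "enat (card S) \<le> 1" by (simp add: one_enat_def)
  qed
  have "Z_independent integer_group {1}"
    unfolding Z_independent_def by (simp add: finprod_integer_group)
  then have "enat (card {1::int}) \<le> group_rank integer_group"
    unfolding group_rank_def by (intro SUP_upper) auto
  then show "1 \<le> group_rank integer_group" by (simp add: one_enat_def)
qed

lemma group_rank_homology_group_contractible_space: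
  assumes "contractible_space X" "topspace X \<noteq> {}"
  shows "group_rank (homology_group (int n) X) = (if n = 0 then 1 else 0)"
proof (cases "n = 0")
  case True
  have "homology_group 0 X \<cong> integer_group"
    using assms by (intro isomorphic_integer_zeroth_homology_group contractible_imp_path_connected_space)
  then show ?thesis
    using True group_rank_iso[OF abelian_homology_group abelian_integer_group] group_rank_integer_group
    by simp
next
  case False
  then have "homology_group (int n) X = reduced_homology_group (int n) X"
    by (simp add: un_reduced_homology_group)
  then show ?thesis
    using False assms
    by (simp add: trivial_reduced_homology_group_contractible_space group_rank_trivial_group)
qed

lemma has_euler_characteristic_contractible_space:
  assumes "contractible_space X" "topspace X \<noteq> {}"
  shows "has_euler_characteristic X 1"
proof -
  note rank = group_rank_homology_group_contractible_space[OF assms]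
  have "{n. group_rank (homology_group (int n) X) \<noteq> 0} = {0}" by (simp add: rank)
  moreover have "group_rank (homology_group (int n) X) \<noteq> \<infinity>" for n
    by (simp add: rank one_enat_def zero_enat_def)
  moreover have "group_rank (homology_group 0 X) = 1" using rank[of 0] by simp
  ultimately show ?thesis
    unfolding has_euler_characteristic_def by (simp add: one_enat_def)
qed

theorem lemma5:
  fixes m1 m2 m3 m4 :: real
  assumes "m1 > 0" "m2 > 0" "m3 > 0" "m4 > 0"
  shows "contractible (Mplus m1 m2 m3 m4) \<and>
         has_euler_characteristic (subtopology euclidean (Mplus m1 m2 m3 m4)) 1"
proof -
  have retract: "Mplus m1 m2 m3 m4 retract_of (ptolemy_cone - {0})"
    unfolding Mplus_eq_level_set
    by (rule level_set_retract_of_punctured_cone)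
      (use assms in \<open>auto simp: scaleR_mem_ptolemy_cone continuous_on_moment_I moment_I_pos
                                moment_I_scaleR\<close>)
  have "axis 1 1 \<in> ptolemy_cone - {0}"
    by (simp add: ptolemy_cone_def ptolemy_P_def, simp add: axis_def)
  then have nonempty: "Mplus m1 m2 m3 m4 \<noteq> {}"
    using retract by (metis retract_of_empty(1) empty_iff)
  have "contractible (Mplus m1 m2 m3 m4)"
    using retract contractible_punctured_ptolemy_cone retract_of_contractible by blast
  then show ?thesis
    using nonempty by (simp add: has_euler_characteristic_contractible_space)
qed

end
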